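(* Let $L>0$, $\theta>0$, and for each $t$ let $\widehat\varphi_t$ be convex with $C\subset\operatorname{dom}\partial\widehat\varphi_t$ and $\partial\widehat\varphi_t$ $L$-Lipschitz on $C$ (i.e. $\|g-h\|\le L\|x-y\|$ for $g\in\partial\widehat\varphi_t(x)$, $h\in\partial\widehat\varphi_t(y)$, $x,y\in C$). At each round $t$, let expert points $\boldsymbol x_t=(x_t(0),\dots,x_t(n))\in C^{n+1}$ be given, and let $w_t,\widetilde w_t$ be generated by ONES (with $\widetilde w_1$ having positive entries) using $$\ell_t(i)=\langle g_t,x_t(i)\rangle,\ g_t\in\partial\varphi_t(\overline x_t),\ \overline x_t=\textstyle\sum_i w_t(i)x_t(i);\qquad \widehat\ell_t(i)=\langle \widehat g_t,x_t(i)\rangle,\ \widehat g_t\in\partial\widehat\varphi_t(\widetilde{\overline x}_t),\ \widetilde{\overline x}_t=\textstyle\sum_i\widetilde w_t(i)x_t(i).$$ Then for all $T\ge1$ and $w\in\triangle^n$, $$\sum_{t=1}^T\langle\ell_t,w_t-w\rangle\le\frac1\theta\sum_iw(i)\ln\frac{w(i)}{\widetilde w_1(i)}+\theta\rho^2\sum_{t=1}^T\Big(\sup_{x\in C,\,g\in\partial\varphi_t(x),\,\widehat g\in\partial\widehat\varphi_t(x)}\|g-\widehat g\|^2+\mathbf 1\{\theta>\tfrac{1}{\sqrt2\rho^2L}\}\rho^2L^2\|w_t-\widetilde w_t\|_1^2\Big).$$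
   Context: $H$ is a real Hilbert space, $C\subset H$ nonempty closed convex with diameter $\rho=\sup_{x,y\in C}\|x-y\|<\infty$, and (as used by the paper) $\|x\|\le\rho$ for all $x\in C$. Losses $\varphi_t$ are convex with $C\subset\operatorname{dom}\partial\varphi_t$. ONES: $\widetilde w_{t+1}=\mathscr N(\widetilde w_t\circ e^{-\theta\ell_t})$, $w_{t}=\mathscr N(\widetilde w_{t}\circ e^{-\theta\widehat\ell_{t}})$, where $\triangle^n=\{w\in\mathbb R^{n+1}_+:\|w\|_1=1\}$, $\circ$ is the Hadamard product, $\mathscr N(u)=u/\|u\|_1$; $\mathbf 1\{\cdot\}$ is the zero-one indicator. *)

theory Defs
  imports "HOL-Analysis.Analysis"
begin

definition convex_fun :: "('a::real_vector \<Rightarrow> ereal) \<Rightarrow> bool" where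
  "convex_fun f \<longleftrightarrow> convex {(x, r::real). f x \<le> ereal r}"

definition subdiff :: "('a::real_inner \<Rightarrow> ereal) \<Rightarrow> 'a \<Rightarrow> 'a set" where
  "subdiff f x = {g. f x \<noteq> \<infinity> \<and> f x \<noteq> -\<infinity> \<and>
                     (\<forall>y. f x + ereal (inner g (y - x)) \<le> f y)}"

definition prob_simplex :: "nat \<Rightarrow> (nat \<Rightarrow> real) set" where
  "prob_simplex n = {w. (\<forall>i\<le>n. 0 \<le> w i) \<and> (\<Sum>i\<le>n. w i) = 1}"

end

theory Submission
  imports Defs
begin

text \<open>Both weight sequences are exponential-weights updates of the lagging weights, so each
  round telescopes in the KL divergence to the comparator \<open>u\<close>, up to a cross term (true minus
  hint losses, paired with played minus next lagging weights) and a stability bonus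
  \<open>-\<parallel>w\<^sub>t - w\<^sup>~\<^sub>t\<parallel>\<^sub>1\<^sup>2 / 2\<close> coming from Pinsker's inequality. The loss gap is at most
  \<open>\<rho> (\<parallel>g\<^sub>t - h\<^sub>t\<parallel> + L \<rho> \<parallel>w\<^sub>t - w\<^sup>~\<^sub>t\<parallel>\<^sub>1)\<close>, where \<open>h\<^sub>t\<close> is a hint subgradient at the played point.
  AM-GM turns the cross term into \<open>\<theta>\<^sup>2 \<rho>\<^sup>2\<close> times the squared gap, and for small \<open>\<theta>\<close> the
  Lipschitz part of that is absorbed by the stability bonus.\<close>

lemma min_at_deriv_sign_change:
  fixes f f' :: "real \<Rightarrow> real"
  assumes deriv: "\<And>z. 0 < z \<Longrightarrow> (f has_real_derivative f' z) (at z)"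
    and nonpos: "\<And>z. 0 < z \<Longrightarrow> z \<le> c \<Longrightarrow> f' z \<le> 0"
    and nonneg: "\<And>z. c \<le> z \<Longrightarrow> 0 \<le> f' z"
    and "0 < c" "0 < x"
  shows "f c \<le> f x"
proof (cases "c \<le> x")
  case True
  show ?thesis
  proof (rule DERIV_nonneg_imp_nondecreasing[OF True])
    fix z assume "c \<le> z" "z \<le> x"
    with \<open>0 < c\<close> have "0 < z" by simp
    with \<open>c \<le> z\<close> show "\<exists>d. (f has_real_derivative d) (at z) \<and> 0 \<le> d"
      using deriv nonneg by blast
  qed
next
  case False
  show ?thesis
  proof (rule DERIV_nonpos_imp_nonincreasing[of x c])
    fix z assume "x \<le> z" "z \<le> c"
    with \<open>0 < x\<close> have "0 < z" by simp
    with \<open>z \<le> c\<close> show "\<exists>d. (f has_real_derivative d) (at z) \<and> d \<le> 0"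
      using deriv nonpos by blast
  qed (use False in simp)
qed

lemma xlnx_quadratic_lower_bound:
  fixes x :: real
  assumes "0 < x"
  shows "3 * (x - 1)\<^sup>2 / (2 * (x + 2)) \<le> x * ln x - x + 1"
proof -
  define f where "f z = z * ln z - z + 1 - 3 * (z - 1)\<^sup>2 / (2 * (z + 2))" for z :: real
  define k where "k z = ln z - 3 * (z - 1) * (z + 5) / (2 * (z + 2)\<^sup>2)" for z :: real
  have k_deriv: "(k has_real_derivative 1 / z - 27 / (z + 2) ^ 3) (at z)" if "0 < z" for z
  proof -
    have "(k has_real_derivative 1 / z - ((3 * (z + 5) + 3 * (z - 1)) * (2 * (z + 2)\<^sup>2)
            - 3 * (z - 1) * (z + 5) * (2 * (2 * (z + 2)))) / (2 * (z + 2)\<^sup>2)\<^sup>2) (at z)"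
      unfolding k_def using that by (auto intro!: derivative_eq_intros simp: power2_eq_square)
    moreover have "1 / z - ((3 * (z + 5) + 3 * (z - 1)) * (2 * (z + 2)\<^sup>2)
            - 3 * (z - 1) * (z + 5) * (2 * (2 * (z + 2)))) / (2 * (z + 2)\<^sup>2)\<^sup>2
        = 1 / z - 27 / (z + 2) ^ 3"
    proof -
      have "z + 2 \<noteq> 0" using that by simp
      then show ?thesis using that by (simp add: field_simps) algebra
    qed
    ultimately show ?thesis by simp
  qed
  \<comment> \<open>\<open>(z + 2)\<^sup>3 - 27 z = (z - 1)\<^sup>2 (z + 8)\<close>, so \<open>k = f'\<close> is nondecreasing; it vanishes at 1\<close>
  have k_mono: "k y \<le> k z" if "0 < y" "y \<le> z" for y z
  proof (rule DERIV_nonneg_imp_nondecreasing[OF \<open>y \<le> z\<close>])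
    fix v assume "y \<le> v" "v \<le> z"
    with \<open>0 < y\<close> have "0 < v" by simp
    have "(v + 2) ^ 3 - 27 * v = (v - 1)\<^sup>2 * (v + 8)"
      by (simp add: algebra_simps power2_eq_square power3_eq_cube)
    moreover have "0 \<le> (v - 1)\<^sup>2 * (v + 8)" using \<open>0 < v\<close> by simp
    ultimately have "27 * v \<le> (v + 2) ^ 3" by linarith
    with \<open>0 < v\<close> have "27 / (v + 2) ^ 3 \<le> 1 / v" by (simp add: field_simps)
    with k_deriv[OF \<open>0 < v\<close>] show "\<exists>d. (k has_real_derivative d) (at v) \<and> 0 \<le> d" by force
  qed
  have f_deriv: "(f has_real_derivative k z) (at z)" if "0 < z" for z
  proof -
    have "(f has_real_derivative
        ln z + z * (1 / z) - 1 - (6 * (z - 1) * (2 * (z + 2)) - 3 * (z - 1)\<^sup>2 * 2) / (2 * (z + 2))\<^sup>2) (at z)"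
      unfolding f_def using that by (auto intro!: derivative_eq_intros simp: power2_eq_square)
    moreover have "ln z + z * (1 / z) - 1 - (6 * (z - 1) * (2 * (z + 2)) - 3 * (z - 1)\<^sup>2 * 2) / (2 * (z + 2))\<^sup>2
        = k z"
    proof -
      have "z + 2 \<noteq> 0" using that by simp
      then show ?thesis unfolding k_def using that by (simp add: field_simps) algebra
    qed
    ultimately show ?thesis by simp
  qed
  have "k 1 = 0" by (simp add: k_def)
  have "f 1 \<le> f x"
    by (rule min_at_deriv_sign_change[OF f_deriv])
      (use k_mono[of _ 1] k_mono[of 1] \<open>k 1 = 0\<close> \<open>0 < x\<close> in auto)
  then show ?thesis by (simp add: f_def)
qed

lemma pinsker_pointwise:
  fixes p q :: real
  assumes "0 \<le> p" "0 < q"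
  shows "3 * (p - q)\<^sup>2 / (2 * (p + 2 * q)) \<le> p * ln (p / q) - p + q"
proof (cases "p = 0")
  case True
  with assms show ?thesis by (simp add: power2_eq_square field_simps)
next
  case False
  with assms have "0 < p / q" by simp
  from mult_left_mono[OF xlnx_quadratic_lower_bound[OF this], of q] \<open>0 < q\<close>
  have "q * (3 * (p / q - 1)\<^sup>2 / (2 * (p / q + 2))) \<le> q * (p / q * ln (p / q) - p / q + 1)"
    by simp
  moreover have "q * (3 * (p / q - 1)\<^sup>2 / (2 * (p / q + 2))) = 3 * (p - q)\<^sup>2 / (2 * (p + 2 * q))"
  proof -
    have "p / q - 1 = (p - q) / q" "p / q + 2 = (p + 2 * q) / q"
      using \<open>0 < q\<close> by (auto simp: field_simps)
    with assms show ?thesis by (simp add: power_divide power2_eq_square)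
  qed
  moreover have "q * (p / q * ln (p / q) - p / q + 1) = p * ln (p / q) - p + q"
    using \<open>0 < q\<close> by (simp add: field_simps)
  ultimately show ?thesis by simp
qed

lemma Cauchy_Schwarz_weighted_abs:
  fixes a b :: "'a \<Rightarrow> real"
  assumes "\<And>i. i \<in> I \<Longrightarrow> 0 < b i"
  shows "(\<Sum>i\<in>I. \<bar>a i\<bar>)\<^sup>2 \<le> (\<Sum>i\<in>I. (a i)\<^sup>2 / b i) * (\<Sum>i\<in>I. b i)"
proof -
  have "(\<Sum>i\<in>I. \<bar>a i\<bar> / sqrt (b i) * sqrt (b i))\<^sup>2
     \<le> (\<Sum>i\<in>I. (\<bar>a i\<bar> / sqrt (b i))\<^sup>2) * (\<Sum>i\<in>I. (sqrt (b i))\<^sup>2)"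
    by (rule Cauchy_Schwarz_ineq_sum)
  moreover have "(\<Sum>i\<in>I. \<bar>a i\<bar> / sqrt (b i) * sqrt (b i)) = (\<Sum>i\<in>I. \<bar>a i\<bar>)"
    "(\<Sum>i\<in>I. (\<bar>a i\<bar> / sqrt (b i))\<^sup>2) = (\<Sum>i\<in>I. (a i)\<^sup>2 / b i)"
    "(\<Sum>i\<in>I. (sqrt (b i))\<^sup>2) = (\<Sum>i\<in>I. b i)"
    using assms by (auto intro!: sum.cong simp: power_divide less_imp_le dest: assms)
  ultimately show ?thesis by simp
qed

definition KL :: "nat \<Rightarrow> (nat \<Rightarrow> real) \<Rightarrow> (nat \<Rightarrow> real) \<Rightarrow> real" where
  "KL n p q = (\<Sum>i\<le>n. p i * ln (p i / q i))"

lemma KL_self [simp]: "KL n p p = 0"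
  by (simp add: KL_def sum.neutral)

lemma pinsker:
  assumes p: "p \<in> prob_simplex n" and q: "q \<in> prob_simplex n" "\<forall>i\<le>n. 0 < q i"
  shows "(\<Sum>i\<le>n. \<bar>p i - q i\<bar>)\<^sup>2 / 2 \<le> KL n p q"
proof -
  have p_nonneg: "\<forall>i\<le>n. 0 \<le> p i" and sums: "(\<Sum>i\<le>n. p i) = 1" "(\<Sum>i\<le>n. q i) = 1"
    using p q by (auto simp: prob_simplex_def)
  have "(\<Sum>i\<le>n. \<bar>p i - q i\<bar>)\<^sup>2
      \<le> (\<Sum>i\<le>n. (p i - q i)\<^sup>2 / (p i + 2 * q i)) * (\<Sum>i\<le>n. p i + 2 * q i)"
    by (rule Cauchy_Schwarz_weighted_abs) (use p_nonneg q in \<open>auto simp: add_nonneg_pos\<close>)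
  also have "(\<Sum>i\<le>n. p i + 2 * q i) = 3"
    using sums by (simp add: sum.distrib sum_distrib_left[symmetric])
  finally have "(\<Sum>i\<le>n. \<bar>p i - q i\<bar>)\<^sup>2 / 2 \<le> 3 / 2 * (\<Sum>i\<le>n. (p i - q i)\<^sup>2 / (p i + 2 * q i))"
    by simp
  also have "\<dots> = (\<Sum>i\<le>n. 3 * (p i - q i)\<^sup>2 / (2 * (p i + 2 * q i)))"
    by (simp add: sum_distrib_left)
  also have "\<dots> \<le> (\<Sum>i\<le>n. p i * ln (p i / q i) - p i + q i)"
    by (rule sum_mono) (use p_nonneg q pinsker_pointwise in auto)
  also have "\<dots> = KL n p q"
    using sums by (simp add: KL_def sum.distrib sum_subtractf)
  finally show ?thesis .
qed

lemma KL_nonneg: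
  assumes "p \<in> prob_simplex n" "q \<in> prob_simplex n" "\<forall>i\<le>n. 0 < q i"
  shows "0 \<le> KL n p q"
  using pinsker[OF assms] by (smt (verit) zero_le_divide_iff zero_le_power2)

definition hedge_update :: "real \<Rightarrow> nat \<Rightarrow> (nat \<Rightarrow> real) \<Rightarrow> (nat \<Rightarrow> real) \<Rightarrow> nat \<Rightarrow> real" where
  "hedge_update \<theta> n q c i = q i * exp (- \<theta> * c i) / (\<Sum>j\<le>n. q j * exp (- \<theta> * c j))"

lemma hedge_update_normalizer_pos:
  fixes q c :: "nat \<Rightarrow> real"
  assumes "\<forall>i\<le>n. 0 < q i"
  shows "0 < (\<Sum>j\<le>n. q j * exp (- \<theta> * c j))"
  using assms by (intro sum_pos) auto

lemma hedge_update_simplex: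
  fixes q c :: "nat \<Rightarrow> real"
  assumes q: "\<forall>i\<le>n. 0 < q i" and q': "\<forall>i\<le>n. q' i = hedge_update \<theta> n q c i"
  shows "q' \<in> prob_simplex n" "\<forall>i\<le>n. 0 < q' i"
proof -
  let ?Z = "\<Sum>j\<le>n. q j * exp (- \<theta> * c j)"
  have "0 < ?Z" using hedge_update_normalizer_pos[OF q] .
  then show "\<forall>i\<le>n. 0 < q' i" using q q' by (simp add: hedge_update_def)
  have "(\<Sum>i\<le>n. q' i) = (\<Sum>i\<le>n. q i * exp (- \<theta> * c i) / ?Z)"
    using q' by (simp add: hedge_update_def)
  also have "\<dots> = 1" using \<open>0 < ?Z\<close> by (simp add: sum_divide_distrib[symmetric])
  finally show "q' \<in> prob_simplex n"
    using \<open>\<forall>i\<le>n. 0 < q' i\<close> by (simp add: prob_simplex_def less_imp_le)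
qed

lemma KL_diff_hedge_update:
  fixes q c :: "nat \<Rightarrow> real"
  assumes u: "u \<in> prob_simplex n" and q: "\<forall>i\<le>n. 0 < q i"
    and q': "\<forall>i\<le>n. q' i = hedge_update \<theta> n q c i"
  shows "KL n u q - KL n u q' = - \<theta> * (\<Sum>i\<le>n. c i * u i) - ln (\<Sum>j\<le>n. q j * exp (- \<theta> * c j))"
proof -
  let ?Z = "\<Sum>j\<le>n. q j * exp (- \<theta> * c j)"
  have "0 < ?Z" using hedge_update_normalizer_pos[OF q] .
  have termwise: "u i * ln (u i / q i) - u i * ln (u i / q' i) = - \<theta> * (c i * u i) - u i * ln ?Z"
    if "i \<le> n" for i
  proof (cases "u i = 0")
    case False
    with u that have "0 < u i" by (auto simp: prob_simplex_def order_less_le)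
    have "0 < q i" "0 < q' i" using q hedge_update_simplex(2)[OF q q'] that by auto
    then have "u i * ln (u i / q i) - u i * ln (u i / q' i) = u i * (ln (q' i) - ln (q i))"
      using \<open>0 < u i\<close> by (simp add: ln_div algebra_simps)
    also have "ln (q' i) = ln (q i) - \<theta> * c i - ln ?Z"
      using q' \<open>0 < q i\<close> \<open>0 < ?Z\<close> that by (simp add: hedge_update_def ln_div ln_mult)
    finally show ?thesis by (simp add: algebra_simps)
  qed simp
  have "KL n u q - KL n u q' = (\<Sum>i\<le>n. - \<theta> * (c i * u i) - u i * ln ?Z)"
    unfolding KL_def sum_subtractf[symmetric] by (rule sum.cong) (simp_all add: termwise)
  also have "\<dots> = - \<theta> * (\<Sum>i\<le>n. c i * u i) - ln ?Z"
    using u by (simp add: prob_simplex_def sum_subtractf sum_distrib_left sum_distrib_right[symmetric])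
  finally show ?thesis .
qed

lemma sum_mult_le_bound_times_l1:
  fixes a b :: "'a \<Rightarrow> real"
  assumes "\<forall>i\<in>I. \<bar>a i\<bar> \<le> M"
  shows "(\<Sum>i\<in>I. a i * b i) \<le> M * (\<Sum>i\<in>I. \<bar>b i\<bar>)"
proof -
  have "a i * b i \<le> M * \<bar>b i\<bar>" if "i \<in> I" for i
  proof -
    have "a i * b i \<le> \<bar>a i\<bar> * \<bar>b i\<bar>" by (simp add: abs_mult[symmetric])
    also have "\<dots> \<le> M * \<bar>b i\<bar>" using assms that by (simp add: mult_right_mono)
    finally show ?thesis .
  qed
  then show ?thesis by (simp add: sum_mono sum_distrib_left)
qed

text \<open>One round of optimistic Hedge: \<open>q\<close> is the lagging weight, \<open>w\<close> the played weight (updated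
  with the hint losses \<open>ch\<close>), \<open>q'\<close> the next lagging weight (updated with the true losses \<open>c\<close>).
  Expanding the three KL divergences between \<open>u, q, q', w\<close> leaves the cross term
  \<open>\<theta>\<langle>c - ch, w - q'\<rangle>\<close>, which Pinsker and AM-GM absorb into \<open>KL(q', w)\<close>.\<close>
lemma optimistic_hedge_round:
  fixes q q' w c ch u :: "nat \<Rightarrow> real"
  assumes q: "q \<in> prob_simplex n" "\<forall>i\<le>n. 0 < q i" and u: "u \<in> prob_simplex n"
    and "0 < \<theta>"
    and M: "\<forall>i\<le>n. \<bar>c i - ch i\<bar> \<le> M"
    and w: "\<forall>i\<le>n. w i = hedge_update \<theta> n q ch i"
    and q': "\<forall>i\<le>n. q' i = hedge_update \<theta> n q c i"
  shows "\<theta> * (\<Sum>i\<le>n. c i * (w i - u i))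
     \<le> KL n u q - KL n u q' + \<theta>\<^sup>2 * M\<^sup>2 / 2 - (\<Sum>i\<le>n. \<bar>w i - q i\<bar>)\<^sup>2 / 2"
proof -
  let ?Z = "\<Sum>j\<le>n. q j * exp (- \<theta> * ch j)"
  let ?Z' = "\<Sum>j\<le>n. q j * exp (- \<theta> * c j)"
  note w_simplex = hedge_update_simplex[OF q(2) w]
  note q'_simplex = hedge_update_simplex[OF q(2) q']
  have KL_u: "KL n u q - KL n u q' = - \<theta> * (\<Sum>i\<le>n. c i * u i) - ln ?Z'"
    by (rule KL_diff_hedge_update[OF u q(2) q'])
  have KL_wq: "KL n w q = - \<theta> * (\<Sum>i\<le>n. ch i * w i) - ln ?Z"
    using KL_diff_hedge_update[OF w_simplex(1) q(2) w] by simp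
  have KL_q'w: "KL n q' w = - \<theta> * (\<Sum>i\<le>n. c i * q' i) - ln ?Z' + \<theta> * (\<Sum>i\<le>n. ch i * q' i) + ln ?Z"
    using KL_diff_hedge_update[OF q'_simplex(1) q(2) w] KL_diff_hedge_update[OF q'_simplex(1) q(2) q']
    by simp
  have cross: "(\<Sum>i\<le>n. (c i - ch i) * (w i - q' i))
      = (\<Sum>i\<le>n. c i * w i) - (\<Sum>i\<le>n. ch i * w i) - (\<Sum>i\<le>n. c i * q' i) + (\<Sum>i\<le>n. ch i * q' i)"
    by (simp add: algebra_simps sum.distrib sum_subtractf)
  have gain: "(\<Sum>i\<le>n. c i * (w i - u i)) = (\<Sum>i\<le>n. c i * w i) - (\<Sum>i\<le>n. c i * u i)"
    by (simp add: algebra_simps sum_subtractf)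
  have identity: "\<theta> * (\<Sum>i\<le>n. c i * (w i - u i))
      = KL n u q - KL n u q' + \<theta> * (\<Sum>i\<le>n. (c i - ch i) * (w i - q' i)) - KL n q' w - KL n w q"
    unfolding gain KL_u KL_wq KL_q'w cross by (simp add: algebra_simps)
  define D where "D = (\<Sum>i\<le>n. \<bar>w i - q' i\<bar>)"
  have "(\<Sum>i\<le>n. (c i - ch i) * (w i - q' i)) \<le> M * D"
    unfolding D_def by (rule sum_mult_le_bound_times_l1) (use M in simp)
  with \<open>0 < \<theta>\<close> have "\<theta> * (\<Sum>i\<le>n. (c i - ch i) * (w i - q' i)) \<le> \<theta> * M * D"
    by (simp add: mult_left_mono)
  moreover have "D\<^sup>2 / 2 \<le> KL n q' w"
    using pinsker[OF q'_simplex(1) w_simplex] by (simp add: D_def abs_minus_commute)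
  moreover have "(\<Sum>i\<le>n. \<bar>w i - q i\<bar>)\<^sup>2 / 2 \<le> KL n w q"
    by (rule pinsker[OF w_simplex(1) q])
  moreover have "\<theta> * M * D - D\<^sup>2 / 2 \<le> \<theta>\<^sup>2 * M\<^sup>2 / 2"
    using zero_le_power2[of "\<theta> * M - D"] by (simp add: power2_eq_square algebra_simps)
  ultimately show ?thesis using identity by linarith
qed

lemma hedge_iterates_simplex:
  fixes q c :: "nat \<Rightarrow> nat \<Rightarrow> real"
  assumes "q 1 \<in> prob_simplex n" "\<forall>i\<le>n. 0 < q 1 i"
    and upd: "\<forall>t\<ge>1. \<forall>i\<le>n. q (Suc t) i = hedge_update \<theta> n (q t) (c t) i"
    and "1 \<le> t"
  shows "q t \<in> prob_simplex n \<and> (\<forall>i\<le>n. 0 < q t i)"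
  using \<open>1 \<le> t\<close>
proof (induction t rule: dec_induct)
  case (step t)
  then show ?case using hedge_update_simplex[of n "q t" "q (Suc t)" \<theta> "c t"] upd by simp
qed (use assms in simp)

lemma optimistic_hedge_regret:
  fixes q w c ch :: "nat \<Rightarrow> nat \<Rightarrow> real" and u M :: "nat \<Rightarrow> real"
  assumes q1: "q 1 \<in> prob_simplex n" "\<forall>i\<le>n. 0 < q 1 i" and u: "u \<in> prob_simplex n"
    and "0 < \<theta>"
    and M: "\<forall>t\<ge>1. \<forall>i\<le>n. \<bar>c t i - ch t i\<bar> \<le> M t"
    and upd_q: "\<forall>t\<ge>1. \<forall>i\<le>n. q (Suc t) i = hedge_update \<theta> n (q t) (c t) i"
    and upd_w: "\<forall>t\<ge>1. \<forall>i\<le>n. w t i = hedge_update \<theta> n (q t) (ch t) i"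
  shows "\<theta> * (\<Sum>t=1..T. \<Sum>i\<le>n. c t i * (w t i - u i))
     \<le> KL n u (q 1) + (\<Sum>t=1..T. \<theta>\<^sup>2 * (M t)\<^sup>2 / 2 - (\<Sum>i\<le>n. \<bar>w t i - q t i\<bar>)\<^sup>2 / 2)"
proof -
  note q_simplex = hedge_iterates_simplex[OF q1 upd_q]
  have "\<theta> * (\<Sum>t=1..T. \<Sum>i\<le>n. c t i * (w t i - u i)) = (\<Sum>t=1..T. \<theta> * (\<Sum>i\<le>n. c t i * (w t i - u i)))"
    by (simp add: sum_distrib_left)
  also have "\<dots> \<le> (\<Sum>t=1..T. KL n u (q t) - KL n u (q (Suc t))
                   + (\<theta>\<^sup>2 * (M t)\<^sup>2 / 2 - (\<Sum>i\<le>n. \<bar>w t i - q t i\<bar>)\<^sup>2 / 2))"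
  proof (rule sum_mono)
    fix t assume "t \<in> {1..T}"
    then have "1 \<le> t" by simp
    with q_simplex u \<open>0 < \<theta>\<close> M upd_q upd_w
    show "\<theta> * (\<Sum>i\<le>n. c t i * (w t i - u i)) \<le> KL n u (q t) - KL n u (q (Suc t))
                   + (\<theta>\<^sup>2 * (M t)\<^sup>2 / 2 - (\<Sum>i\<le>n. \<bar>w t i - q t i\<bar>)\<^sup>2 / 2)"
      using optimistic_hedge_round[of "q t" n u \<theta> "c t" "ch t" "M t" "w t" "q (Suc t)"] by simp
  qed
  also have "\<dots> = KL n u (q 1) - KL n u (q (Suc T))
      + (\<Sum>t=1..T. \<theta>\<^sup>2 * (M t)\<^sup>2 / 2 - (\<Sum>i\<le>n. \<bar>w t i - q t i\<bar>)\<^sup>2 / 2)"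
    using sum_Suc_diff[of 1 T "\<lambda>t. - KL n u (q t)"] by (simp add: sum.distrib)
  also have "\<dots> \<le> KL n u (q 1) + (\<Sum>t=1..T. \<theta>\<^sup>2 * (M t)\<^sup>2 / 2 - (\<Sum>i\<le>n. \<bar>w t i - q t i\<bar>)\<^sup>2 / 2)"
    using KL_nonneg[OF u] q_simplex[of "Suc T"] by simp
  finally show ?thesis .
qed

lemma hint_loss_gap_le:
  fixes g gh h :: "'a::real_inner" and x :: "nat \<Rightarrow> 'a" and w v :: "nat \<Rightarrow> real"
  assumes x: "\<forall>j\<le>n. norm (x j) \<le> \<rho>" and "i \<le> n" and "0 \<le> L"
    and h: "norm (h - gh) \<le> L * norm ((\<Sum>j\<le>n. w j *\<^sub>R x j) - (\<Sum>j\<le>n. v j *\<^sub>R x j))"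
  shows "\<bar>inner g (x i) - inner gh (x i)\<bar> \<le> \<rho> * (norm (g - h) + L * \<rho> * (\<Sum>j\<le>n. \<bar>w j - v j\<bar>))"
proof -
  have "norm ((\<Sum>j\<le>n. w j *\<^sub>R x j) - (\<Sum>j\<le>n. v j *\<^sub>R x j)) = norm (\<Sum>j\<le>n. (w j - v j) *\<^sub>R x j)"
    by (simp add: sum_subtractf scaleR_diff_left)
  also have "\<dots> \<le> (\<Sum>j\<le>n. \<bar>w j - v j\<bar> * \<rho>)"
    by (rule order_trans[OF norm_sum sum_mono]) (use x in \<open>auto intro: mult_left_mono\<close>)
  finally have "norm ((\<Sum>j\<le>n. w j *\<^sub>R x j) - (\<Sum>j\<le>n. v j *\<^sub>R x j)) \<le> \<rho> * (\<Sum>j\<le>n. \<bar>w j - v j\<bar>)"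
    by (simp add: sum_distrib_left mult.commute)
  with h \<open>0 \<le> L\<close> have "norm (h - gh) \<le> L * (\<rho> * (\<Sum>j\<le>n. \<bar>w j - v j\<bar>))"
    by (meson mult_left_mono order_trans)
  moreover have "norm (g - gh) \<le> norm (g - h) + norm (h - gh)"
    using norm_triangle_ineq[of "g - h" "h - gh"] by simp
  ultimately have gap: "norm (g - gh) \<le> norm (g - h) + L * \<rho> * (\<Sum>j\<le>n. \<bar>w j - v j\<bar>)"
    by (simp add: mult.assoc)
  have "\<bar>inner g (x i) - inner gh (x i)\<bar> \<le> norm (g - gh) * norm (x i)"
    using Cauchy_Schwarz_ineq2[of "g - gh" "x i"] by (simp add: inner_diff_left)
  also have "\<dots> \<le> (norm (g - h) + L * \<rho> * (\<Sum>j\<le>n. \<bar>w j - v j\<bar>)) * \<rho>"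
    using x \<open>i \<le> n\<close> order_trans[OF norm_ge_zero gap] by (intro mult_mono[OF gap]) auto
  finally show ?thesis by (simp add: mult.commute)
qed

lemma optimism_penalty_le:
  fixes a \<Delta> \<rho> L \<theta> :: real
  assumes "0 < L" "0 < \<theta>"
  shows "\<theta>\<^sup>2 * (\<rho> * (a + L * \<rho> * \<Delta>))\<^sup>2 / 2 - \<Delta>\<^sup>2 / 2
    \<le> \<theta>\<^sup>2 * \<rho>\<^sup>2 * (a\<^sup>2 + (if \<theta> > 1 / (sqrt 2 * \<rho>\<^sup>2 * L) then 1 else 0) * \<rho>\<^sup>2 * L\<^sup>2 * \<Delta>\<^sup>2)"
proof -
  have "\<theta>\<^sup>2 * (\<rho> * (a + L * \<rho> * \<Delta>))\<^sup>2 / 2 \<le> \<theta>\<^sup>2 * \<rho>\<^sup>2 * (a\<^sup>2 + (L * \<rho> * \<Delta>)\<^sup>2)"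
  proof -
    have "(a + L * \<rho> * \<Delta>)\<^sup>2 \<le> 2 * (a\<^sup>2 + (L * \<rho> * \<Delta>)\<^sup>2)"
      using zero_le_power2[of "a - L * \<rho> * \<Delta>"] by (simp add: power2_eq_square algebra_simps)
    then have "(\<rho> * (a + L * \<rho> * \<Delta>))\<^sup>2 \<le> \<rho>\<^sup>2 * (2 * (a\<^sup>2 + (L * \<rho> * \<Delta>)\<^sup>2))"
      unfolding power_mult_distrib[of \<rho>] by (rule mult_left_mono) simp
    from mult_left_mono[OF this, of "\<theta>\<^sup>2 / 2"] show ?thesis by (simp add: algebra_simps)
  qed
  moreover have "\<theta>\<^sup>2 * \<rho>\<^sup>2 * (L * \<rho> * \<Delta>)\<^sup>2 - \<Delta>\<^sup>2 / 2
      \<le> \<theta>\<^sup>2 * \<rho>\<^sup>2 * ((if \<theta> > 1 / (sqrt 2 * \<rho>\<^sup>2 * L) then 1 else 0) * \<rho>\<^sup>2 * L\<^sup>2 * \<Delta>\<^sup>2)"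
  proof (cases "\<theta> > 1 / (sqrt 2 * \<rho>\<^sup>2 * L)")
    case True
    then show ?thesis by (simp add: power_mult_distrib algebra_simps)
  next
    case False
    \<comment> \<open>for small \<open>\<theta>\<close> the stability term \<open>\<Delta>\<^sup>2 / 2\<close> absorbs the Lipschitz contribution\<close>
    have "\<theta>\<^sup>2 * \<rho>\<^sup>2 * (L * \<rho> * \<Delta>)\<^sup>2 \<le> \<Delta>\<^sup>2 / 2"
    proof (cases "\<rho> = 0")
      case False
      then have "0 < sqrt 2 * \<rho>\<^sup>2 * L" using \<open>0 < L\<close> by simp
      with \<open>\<not> \<theta> > 1 / (sqrt 2 * \<rho>\<^sup>2 * L)\<close> have "\<theta> * (sqrt 2 * \<rho>\<^sup>2 * L) \<le> 1"
        by (simp add: field_simps)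
      with \<open>0 < \<theta>\<close> \<open>0 < sqrt 2 * \<rho>\<^sup>2 * L\<close> have "(\<theta> * (sqrt 2 * \<rho>\<^sup>2 * L))\<^sup>2 \<le> 1"
        by (intro power_le_one) simp_all
      then have "2 * (\<theta>\<^sup>2 * \<rho>\<^sup>2 * (L * \<rho>)\<^sup>2) \<le> 1"
        by (simp add: power_mult_distrib power2_eq_square algebra_simps)
      from mult_right_mono[OF this zero_le_power2[of \<Delta>]] show ?thesis
        by (simp add: power_mult_distrib algebra_simps)
    qed simp
    with False show ?thesis by simp
  qed
  ultimately show ?thesis by (simp add: algebra_simps)
qed

lemma ereal_le_add_mult_sum_upper:
  fixes a e :: "'b \<Rightarrow> real" and S :: "'b \<Rightarrow> ereal"
  assumes "R \<le> K + c * (\<Sum>t\<in>A. a t + e t)" "0 \<le> c" "\<forall>t\<in>A. ereal (a t) \<le> S t"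
  shows "ereal R \<le> ereal K + ereal c * (\<Sum>t\<in>A. S t + ereal (e t))"
proof -
  have "ereal R \<le> ereal K + ereal c * (\<Sum>t\<in>A. ereal (a t + e t))"
    using assms(1) by (simp add: sum_ereal)
  also have "(\<Sum>t\<in>A. ereal (a t + e t)) \<le> (\<Sum>t\<in>A. S t + ereal (e t))"
  proof (rule sum_mono)
    fix t assume "t \<in> A"
    with assms(3) have "ereal (a t) + ereal (e t) \<le> S t + ereal (e t)" by (intro add_right_mono) blast
    then show "ereal (a t + e t) \<le> S t + ereal (e t)" by simp
  qed
  then have "ereal K + ereal c * (\<Sum>t\<in>A. ereal (a t + e t)) \<le> ereal K + ereal c * (\<Sum>t\<in>A. S t + ereal (e t))"
    using assms(2) by (intro add_left_mono ereal_mult_left_mono) simp_all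
  finally show ?thesis .
qed

lemma optimistic_hedge_regret_lipschitz_gap:
  fixes q w c ch :: "nat \<Rightarrow> nat \<Rightarrow> real" and u a :: "nat \<Rightarrow> real"
  assumes q1: "q 1 \<in> prob_simplex n" "\<forall>i\<le>n. 0 < q 1 i" and u: "u \<in> prob_simplex n"
    and "0 < \<theta>" "0 < L"
    and gap: "\<forall>t\<ge>1. \<forall>i\<le>n. \<bar>c t i - ch t i\<bar> \<le> \<rho> * (a t + L * \<rho> * (\<Sum>i\<le>n. \<bar>w t i - q t i\<bar>))"
    and upd_q: "\<forall>t\<ge>1. \<forall>i\<le>n. q (Suc t) i = hedge_update \<theta> n (q t) (c t) i"
    and upd_w: "\<forall>t\<ge>1. \<forall>i\<le>n. w t i = hedge_update \<theta> n (q t) (ch t) i"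
  shows "(\<Sum>t=1..T. \<Sum>i\<le>n. c t i * (w t i - u i))
    \<le> 1 / \<theta> * KL n u (q 1) + \<theta> * \<rho>\<^sup>2 * (\<Sum>t=1..T. (a t)\<^sup>2
       + (if \<theta> > 1 / (sqrt 2 * \<rho>\<^sup>2 * L) then 1 else 0) * \<rho>\<^sup>2 * L\<^sup>2 * (\<Sum>i\<le>n. \<bar>w t i - q t i\<bar>)\<^sup>2)"
proof -
  define \<Delta> where "\<Delta> t = (\<Sum>i\<le>n. \<bar>w t i - q t i\<bar>)" for t
  define X where
    "X t = (a t)\<^sup>2 + (if \<theta> > 1 / (sqrt 2 * \<rho>\<^sup>2 * L) then 1 else 0) * \<rho>\<^sup>2 * L\<^sup>2 * (\<Delta> t)\<^sup>2" for t
  have "\<theta> * (\<Sum>t=1..T. \<Sum>i\<le>n. c t i * (w t i - u i))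
      \<le> KL n u (q 1) + (\<Sum>t=1..T. \<theta>\<^sup>2 * (\<rho> * (a t + L * \<rho> * \<Delta> t))\<^sup>2 / 2 - (\<Delta> t)\<^sup>2 / 2)"
    using optimistic_hedge_regret[OF q1 u \<open>0 < \<theta>\<close> gap upd_q upd_w] unfolding \<Delta>_def .
  also have "\<dots> \<le> KL n u (q 1) + (\<Sum>t=1..T. \<theta>\<^sup>2 * \<rho>\<^sup>2 * X t)"
    unfolding X_def by (intro add_left_mono sum_mono optimism_penalty_le \<open>0 < L\<close> \<open>0 < \<theta>\<close>)
  also have "\<dots> = KL n u (q 1) + \<theta> * (\<theta> * \<rho>\<^sup>2 * (\<Sum>t=1..T. X t))"
    by (simp add: sum_distrib_left power2_eq_square ac_simps)
  finally show ?thesis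
    using \<open>0 < \<theta>\<close> unfolding X_def \<Delta>_def by (simp add: field_simps)
qed

theorem corollary4:
  fixes C :: "'a::{real_inner, complete_space} set"
    and \<phi> \<phi>h :: "nat \<Rightarrow> 'a \<Rightarrow> ereal"
    and x :: "nat \<Rightarrow> nat \<Rightarrow> 'a"
    and w wt :: "nat \<Rightarrow> nat \<Rightarrow> real"
    and g gh :: "nat \<Rightarrow> 'a"
    and n :: nat and L \<theta> :: real
    and T :: nat and u :: "nat \<Rightarrow> real"
  assumes C_ne: "C \<noteq> {}" and C_closed: "closed C" and C_convex: "convex C"
    and C_bdd: "bounded C"
    and C_norm: "\<forall>y\<in>C. norm y \<le> diameter C"
    and L_pos: "L > 0" and theta_pos: "\<theta> > 0"
    and phi_convex: "\<forall>t\<ge>1. convex_fun (\<phi> t)"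
    and phi_dom: "\<forall>t\<ge>1. \<forall>y\<in>C. subdiff (\<phi> t) y \<noteq> {}"
    and phih_convex: "\<forall>t\<ge>1. convex_fun (\<phi>h t)"
    and phih_dom: "\<forall>t\<ge>1. \<forall>y\<in>C. subdiff (\<phi>h t) y \<noteq> {}"
    and phih_lip: "\<forall>t\<ge>1. \<forall>y\<in>C. \<forall>z\<in>C. \<forall>a\<in>subdiff (\<phi>h t) y. \<forall>b\<in>subdiff (\<phi>h t) z.
                      norm (a - b) \<le> L * norm (y - z)"
    and x_in: "\<forall>t\<ge>1. \<forall>i\<le>n. x t i \<in> C"
    and wt1: "wt 1 \<in> prob_simplex n" and wt1_pos: "\<forall>i\<le>n. wt 1 i > 0"
    and g_sub: "\<forall>t\<ge>1. g t \<in> subdiff (\<phi> t) (\<Sum>i\<le>n. w t i *\<^sub>R x t i)"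
    and gh_sub: "\<forall>t\<ge>1. gh t \<in> subdiff (\<phi>h t) (\<Sum>i\<le>n. wt t i *\<^sub>R x t i)"
    and ones_tilde: "\<forall>t\<ge>1. \<forall>i\<le>n. wt (Suc t) i =
        wt t i * exp (- \<theta> * inner (g t) (x t i)) /
        (\<Sum>j\<le>n. wt t j * exp (- \<theta> * inner (g t) (x t j)))"
    and ones_w: "\<forall>t\<ge>1. \<forall>i\<le>n. w t i =
        wt t i * exp (- \<theta> * inner (gh t) (x t i)) /
        (\<Sum>j\<le>n. wt t j * exp (- \<theta> * inner (gh t) (x t j)))"
    and T_ge: "T \<ge> 1"
    and u_simplex: "u \<in> prob_simplex n"
  shows "ereal (\<Sum>t=1..T. \<Sum>i\<le>n. inner (g t) (x t i) * (w t i - u i))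
    \<le> ereal ((1 / \<theta>) * (\<Sum>i\<le>n. u i * ln (u i / wt 1 i)))
       + ereal (\<theta> * (diameter C)\<^sup>2) *
         (\<Sum>t=1..T.
            Sup {ereal ((norm (a - b))\<^sup>2) | y a b.
                   y \<in> C \<and> a \<in> subdiff (\<phi> t) y \<and> b \<in> subdiff (\<phi>h t) y}
            + ereal ((if \<theta> > 1 / (sqrt 2 * (diameter C)\<^sup>2 * L) then 1 else 0)
                     * (diameter C)\<^sup>2 * L\<^sup>2 * (\<Sum>i\<le>n. \<bar>w t i - wt t i\<bar>)\<^sup>2))"
proof -
  define \<rho> where "\<rho> = diameter C"
  have upd_wt: "\<forall>t\<ge>1. \<forall>i\<le>n. wt (Suc t) i = hedge_update \<theta> n (wt t) (\<lambda>i. inner (g t) (x t i)) i"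
    and upd_w: "\<forall>t\<ge>1. \<forall>i\<le>n. w t i = hedge_update \<theta> n (wt t) (\<lambda>i. inner (gh t) (x t i)) i"
    using ones_tilde ones_w by (simp_all add: hedge_update_def)
  note wt_simplex = hedge_iterates_simplex[OF wt1 wt1_pos upd_wt]
  have w_simplex: "w t \<in> prob_simplex n" if "1 \<le> t" for t
    using hedge_update_simplex(1)[of n "wt t" "w t" \<theta> "\<lambda>i. inner (gh t) (x t i)"] wt_simplex[OF that] upd_w that
    by simp
  have mean_in_C: "(\<Sum>i\<le>n. v i *\<^sub>R x t i) \<in> C" if "v \<in> prob_simplex n" "1 \<le> t" for v t
    using that x_in C_convex by (intro convex_sum) (auto simp: prob_simplex_def)
  have "\<forall>t. \<exists>b. 1 \<le> t \<longrightarrow> b \<in> subdiff (\<phi>h t) (\<Sum>i\<le>n. w t i *\<^sub>R x t i)"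
    using phih_dom mean_in_C w_simplex by blast
  then obtain h where h: "\<forall>t\<ge>1. h t \<in> subdiff (\<phi>h t) (\<Sum>i\<le>n. w t i *\<^sub>R x t i)"
    by (metis choice)
  \<comment> \<open>\<open>h t\<close> is taken at the played point, the same point as \<open>g t\<close>, so that \<open>\<parallel>g t - h t\<parallel>\<close>
    is bounded by the \<open>Sup\<close> term; Lipschitzness of \<open>\<partial>\<phi>h t\<close> carries \<open>h t\<close> over to \<open>gh t\<close>\<close>
  define a where "a t = norm (g t - h t)" for t
  have gap: "\<forall>t\<ge>1. \<forall>i\<le>n. \<bar>inner (g t) (x t i) - inner (gh t) (x t i)\<bar>
      \<le> \<rho> * (a t + L * \<rho> * (\<Sum>i\<le>n. \<bar>w t i - wt t i\<bar>))"
    unfolding a_def \<rho>_def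
    using phih_lip h gh_sub mean_in_C w_simplex wt_simplex x_in C_norm L_pos
    by (intro allI impI hint_loss_gap_le) auto
  have "(\<Sum>t=1..T. \<Sum>i\<le>n. inner (g t) (x t i) * (w t i - u i))
      \<le> 1 / \<theta> * KL n u (wt 1) + \<theta> * \<rho>\<^sup>2 * (\<Sum>t=1..T. (a t)\<^sup>2
       + (if \<theta> > 1 / (sqrt 2 * \<rho>\<^sup>2 * L) then 1 else 0) * \<rho>\<^sup>2 * L\<^sup>2 * (\<Sum>i\<le>n. \<bar>w t i - wt t i\<bar>)\<^sup>2)"
    by (rule optimistic_hedge_regret_lipschitz_gap[OF wt1 wt1_pos u_simplex theta_pos L_pos gap upd_wt upd_w])
  moreover have "ereal ((a t)\<^sup>2) \<le> Sup {ereal ((norm (a - b))\<^sup>2) | y a b.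
      y \<in> C \<and> a \<in> subdiff (\<phi> t) y \<and> b \<in> subdiff (\<phi>h t) y}" if "1 \<le> t" for t
    using g_sub h mean_in_C[OF w_simplex[OF that] that] that unfolding a_def by (intro Sup_upper) blast
  ultimately show ?thesis
    unfolding KL_def \<rho>_def
    by (intro ereal_le_add_mult_sum_upper) (use theta_pos in auto)
qed

end
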